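(* Let $A$ be the random matrix defined in the context. If $D/(k\log k)\to\infty$, then with probability $1-o(1)$, $\kappa(A)\ge\Omega(\sqrt k)$. If $D/(k^2\log k)\to\infty$, then with probability $1-o(1)$, $\lambda(A)\le 2$.
   Context: Random instance: let $S_1,\dots,S_k\subseteq[D]$ be independent uniformly random subsets of $[D]$ (each element included independently with probability $1/2$), and let $A\in\mathbb{R}^{D\times k}$ have $A_{ij}=1/|S_j|$ if $i\in S_j$ and $A_{ij}=0$ otherwise. The $\ell_\infty\to\ell_1$ condition number $\lambda(A)$ is the smallest $\lambda$ such that $\|Ax\|_1\ge\|x\|_\infty/\lambda$ for all $x\in\mathbb{R}^k$. The $\ell_1$-condition number $\kappa(A)$ is the smallest $\kappa$ such that $\|Ax\|_1\ge\|x\|_1/\kappa$ for all $x\in\mathbb{R}^k$. Asymptotics are as $k\to\infty$. *)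

theory Defs
  imports "HOL-Probability.Probability"
begin

text \<open>Indices are 0-based: [D] = {..<D}, columns j \<in> {..<k}.
  A random instance is a tuple S of k subsets of {..<D}, drawn uniformly
  (equivalently: each element included independently with probability 1/2).\<close>

definition rand_sets :: "nat \<Rightarrow> nat \<Rightarrow> (nat \<Rightarrow> nat set) pmf" where
  "rand_sets D k = pmf_of_set (PiE {..<k} (\<lambda>_. Pow {..<D}))"

definition matA :: "(nat \<Rightarrow> nat set) \<Rightarrow> nat \<Rightarrow> nat \<Rightarrow> real" where
  "matA S i j = (if i \<in> S j then 1 / real (card (S j)) else 0)"

definition l1_k :: "nat \<Rightarrow> (nat \<Rightarrow> real) \<Rightarrow> real" where
  "l1_k k x = (\<Sum>j<k. \<bar>x j\<bar>)"

definition linf_k :: "nat \<Rightarrow> (nat \<Rightarrow> real) \<Rightarrow> real" where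
  "linf_k k x = Max (insert 0 ((\<lambda>j. \<bar>x j\<bar>) ` {..<k}))"

definition Ax_l1 :: "nat \<Rightarrow> nat \<Rightarrow> (nat \<Rightarrow> nat set) \<Rightarrow> (nat \<Rightarrow> real) \<Rightarrow> real" where
  "Ax_l1 D k S x = (\<Sum>i<D. \<bar>\<Sum>j<k. matA S i j * x j\<bar>)"

text \<open>Condition numbers: the smallest admissible constant (as extended real;
  infinite if no finite constant works).\<close>
definition kappa :: "nat \<Rightarrow> nat \<Rightarrow> (nat \<Rightarrow> nat set) \<Rightarrow> ereal" where
  "kappa D k S = Inf {c :: ereal. c > 0 \<and>
     (\<forall>x. ereal (l1_k k x) \<le> c * ereal (Ax_l1 D k S x))}"

definition lambda_cn :: "nat \<Rightarrow> nat \<Rightarrow> (nat \<Rightarrow> nat set) \<Rightarrow> ereal" where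
  "lambda_cn D k S = Inf {c :: ereal. c > 0 \<and>
     (\<forall>x. ereal (linf_k k x) \<le> c * ereal (Ax_l1 D k S x))}"

end

theory Submission
  imports Defs
begin

text \<open>Encode the sets by a \<open>D \<times> k\<close> matrix of fair coins with independent rows. Column sizes and
  the column correlations \<open>\<Sum>\<^sub>i\<^sub>\<in>\<^sub>S\<^sub>j (\<plusminus>1 according to i \<in> S\<^sub>l)\<close> are then sums of \<open>D\<close> independent
  bounded terms, so by Hoeffding and a union bound, with probability \<open>1 - O(1/k)\<close> every column
  has at least \<open>D/4\<close> elements and (once \<open>D \<gg> k\<^sup>2 log k\<close>) every correlation is at most \<open>D/(8k)\<close>.

  Large columns give \<open>\<Sum>\<^sub>i\<^sub>j A\<^sub>i\<^sub>j\<^sup>2 \<le> 4k/D\<close>; averaging \<open>\<parallel>A e\<parallel>\<^sub>1\<close> over all sign vectors \<open>e\<close> and using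
  Cauchy--Schwarz yields an \<open>e\<close> with \<open>\<parallel>A e\<parallel>\<^sub>1 \<le> 2\<surd>k\<close> although \<open>\<parallel>e\<parallel>\<^sub>1 = k\<close>, so \<open>\<kappa> \<ge> \<surd>k/2\<close>.
  Small correlations make the sign vector of the column \<open>S\<^sub>l\<close> carrying the largest entry of \<open>x\<close>
  almost orthogonal to all other columns; pairing it with \<open>A x\<close> gives \<open>\<parallel>A x\<parallel>\<^sub>1 \<ge> \<bar>x\<^sub>l\<bar>/2\<close>, so
  \<open>\<lambda> \<le> 2\<close>.\<close>

section \<open>Coin-matrix model of the random sets\<close>

definition coin_row :: "nat \<Rightarrow> (nat \<Rightarrow> bool) pmf" where
  "coin_row k = Pi_pmf {..<k} False (\<lambda>_. bernoulli_pmf (1/2))"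

definition coin_matrix :: "nat \<Rightarrow> nat \<Rightarrow> (nat \<Rightarrow> nat \<Rightarrow> bool) pmf" where
  "coin_matrix D k = Pi_pmf {..<D} (\<lambda>_. False) (\<lambda>_. coin_row k)"

text \<open>Columns \<open>j \<ge> k\<close> get the junk value
  \<open>undefined\<close>, matching the extensional functions in \<open>PiE\<close>.\<close>
definition column_sets :: "nat \<Rightarrow> nat \<Rightarrow> (nat \<Rightarrow> nat \<Rightarrow> bool) \<Rightarrow> nat \<Rightarrow> nat set" where
  "column_sets D k w = (\<lambda>j. if j < k then {i. i < D \<and> w i j} else undefined)"

lemma coin_row_eq_pmf_of_set: "coin_row k = pmf_of_set (PiE_dflt {..<k} False (\<lambda>_. UNIV))"
  unfolding coin_row_def by (simp add: bernoulli_pmf_half_conv_pmf_of_set Pi_pmf_of_set)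

lemma finite_set_pmf_coin_row: "finite (set_pmf (coin_row k))"
  unfolding coin_row_eq_pmf_of_set by (subst set_pmf_of_set) (auto intro!: finite_PiE_dflt)

lemma coin_matrix_eq_pmf_of_set:
  "coin_matrix D k =
     pmf_of_set (PiE_dflt {..<D} (\<lambda>_. False) (\<lambda>_. PiE_dflt {..<k} False (\<lambda>_. UNIV)))"
  unfolding coin_matrix_def coin_row_eq_pmf_of_set by (rule Pi_pmf_of_set) auto

lemma bij_betw_column_sets:
  "bij_betw (column_sets D k)
     (PiE_dflt {..<D} (\<lambda>_. False) (\<lambda>_. PiE_dflt {..<k} False (\<lambda>_. UNIV)))
     (PiE {..<k} (\<lambda>_. Pow {..<D}))"
proof (rule bij_betwI[where g = "\<lambda>S i j. i < D \<and> j < k \<and> i \<in> S j"])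
  fix S assume S: "S \<in> PiE {..<k} (\<lambda>_. Pow {..<D})"
  show "column_sets D k (\<lambda>i j. i < D \<and> j < k \<and> i \<in> S j) = S"
  proof
    fix j show "column_sets D k (\<lambda>i j. i < D \<and> j < k \<and> i \<in> S j) j = S j"
      using S by (cases "j < k") (auto simp: column_sets_def PiE_def extensional_def)
  qed
qed (auto simp: column_sets_def PiE_dflt_def fun_eq_iff)

lemma prob_rand_sets_eq_coin_matrix:
  "measure_pmf.prob (rand_sets D k) {S. P S} =
     measure_pmf.prob (coin_matrix D k) {w. P (column_sets D k w)}"
proof -
  have "rand_sets D k = map_pmf (column_sets D k) (coin_matrix D k)"
    unfolding coin_matrix_eq_pmf_of_set rand_sets_def
    by (rule map_pmf_of_set_bij_betw[symmetric, OF bij_betw_column_sets])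
       (auto intro!: finite_PiE_dflt)
  then show ?thesis by (simp add: vimage_def)
qed

lemma expectation_coin_row_component:
  fixes f :: "bool \<Rightarrow> real"
  assumes "j < k"
  shows "measure_pmf.expectation (coin_row k) (\<lambda>r. f (r j)) =
           measure_pmf.expectation (bernoulli_pmf (1/2)) f"
proof -
  have "map_pmf (\<lambda>r. r j) (coin_row k) = bernoulli_pmf (1/2)"
    unfolding coin_row_def using assms by (subst Pi_pmf_component) auto
  then show ?thesis
    by (metis integral_map_pmf)
qed

lemma expectation_coin_row_pair:
  fixes f g :: "bool \<Rightarrow> real"
  assumes jl: "j < k" "l < k" "j \<noteq> l" and nonneg: "\<And>v. f v \<ge> 0" "\<And>v. g v \<ge> 0"
  shows "measure_pmf.expectation (coin_row k) (\<lambda>r. f (r j) * g (r l)) =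
           measure_pmf.expectation (bernoulli_pmf (1/2)) f *
           measure_pmf.expectation (bernoulli_pmf (1/2)) g"
proof -
  define h where "h x = (if x = j then f else if x = l then g else (\<lambda>_. 1))" for x
  have prod_jl: "(\<Prod>x<k. \<phi> x) = \<phi> j * \<phi> l" if "\<And>x. x \<notin> {j, l} \<Longrightarrow> \<phi> x = 1"
    for \<phi> :: "nat \<Rightarrow> real"
    using jl that by (subst prod.mono_neutral_right[of "{..<k}" "{j, l}"]) auto
  have "measure_pmf.expectation (coin_row k) (\<lambda>r. \<Prod>x<k. h x (r x)) =
          (\<Prod>x<k. measure_pmf.expectation (bernoulli_pmf (1/2)) (h x))"
    unfolding coin_row_def
    by (rule expectation_prod_Pi_pmf) (auto simp: h_def nonneg integrable_measure_pmf_finite)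
  moreover have "(\<lambda>r. \<Prod>x<k. h x (r x)) = (\<lambda>r. f (r j) * g (r l))"
    using jl by (subst prod_jl) (auto simp: h_def)
  moreover have "(\<Prod>x<k. measure_pmf.expectation (bernoulli_pmf (1/2)) (h x)) =
      measure_pmf.expectation (bernoulli_pmf (1/2)) f * measure_pmf.expectation (bernoulli_pmf (1/2)) g"
    using jl by (subst prod_jl) (auto simp: h_def)
  ultimately show ?thesis by simp
qed

lemma expectation_coin_row_indicator:
  "j < k \<Longrightarrow> measure_pmf.expectation (coin_row k) (\<lambda>r. of_bool (r j)) = (1/2 :: real)"
  by (simp add: expectation_coin_row_component[where f = of_bool])

lemma expectation_coin_row_indicator_times_sign:
  assumes "j < k" "l < k" "j \<noteq> l"
  shows "measure_pmf.expectation (coin_row k)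
           (\<lambda>r. of_bool (r j) * (2 * of_bool (r l) - 1)) = (0 :: real)"
proof -
  have "(\<lambda>r. of_bool (r j) * (2 * of_bool (r l) - 1)) =
      (\<lambda>r. 2 * (of_bool (r j) * of_bool (r l)) - (of_bool (r j) :: real))"
    by (auto simp: fun_eq_iff algebra_simps)
  then show ?thesis
    using expectation_coin_row_pair[OF assms, of of_bool of_bool] assms(1)
    by (simp add: integrable_measure_pmf_finite[OF finite_set_pmf_coin_row] expectation_coin_row_indicator)
qed

section \<open>Lower bound for \<open>\<kappa>\<close>\<close>

definition sign_vectors :: "nat \<Rightarrow> (nat \<Rightarrow> real) set" where
  "sign_vectors k = PiE {..<k} (\<lambda>_. {-1, 1})"

lemma finite_sign_vectors: "finite (sign_vectors k)"
  unfolding sign_vectors_def by (auto intro!: finite_PiE)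

lemma sign_vectors_nonempty: "sign_vectors k \<noteq> {}"
  unfolding sign_vectors_def by (auto simp: PiE_eq_empty_iff)

lemma abs_sign_vector: "e \<in> sign_vectors k \<Longrightarrow> j < k \<Longrightarrow> \<bar>e j\<bar> = 1"
  unfolding sign_vectors_def by (auto simp: PiE_def Pi_def)

lemma sum_sign_vectors_mult:
  assumes "j < k" "l < k"
  shows "(\<Sum>e\<in>sign_vectors k. e j * e l) = (if j = l then real (card (sign_vectors k)) else 0)"
proof (cases "j = l")
  case True
  have "e j * e j = 1" if "e \<in> sign_vectors k" for e
    using abs_sign_vector[OF that assms(1)] by (metis abs_mult_self_eq mult_1)
  then show ?thesis
    using True by simp
next
  case False
  have flip_mem: "e(j := - e j) \<in> sign_vectors k" if "e \<in> sign_vectors k" for e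
    using that assms(1) unfolding sign_vectors_def by (auto simp: PiE_def Pi_def extensional_def)
  have "(\<Sum>e\<in>sign_vectors k. e j * e l) =
      (\<Sum>e\<in>sign_vectors k. (e(j := - e j)) j * (e(j := - e j)) l)"
    by (rule sum.reindex_bij_witness[where i = "\<lambda>e. e(j := - e j)" and j = "\<lambda>e. e(j := - e j)"])
       (auto simp: flip_mem)
  also have "\<dots> = - (\<Sum>e\<in>sign_vectors k. e j * e l)"
    using False by (simp add: sum_negf)
  finally show ?thesis
    using False by simp
qed

lemma sum_sign_vectors_square:
  fixes a :: "nat \<Rightarrow> real"
  shows "(\<Sum>e\<in>sign_vectors k. (\<Sum>j<k. a j * e j)\<^sup>2) =
           real (card (sign_vectors k)) * (\<Sum>j<k. (a j)\<^sup>2)"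
proof -
  have "(\<Sum>e\<in>sign_vectors k. (\<Sum>j<k. a j * e j)\<^sup>2) =
      (\<Sum>j<k. \<Sum>l<k. a j * a l * (\<Sum>e\<in>sign_vectors k. e j * e l))"
    by (simp add: power2_eq_square sum_product sum_distrib_left mult_ac sum.swap[of _ "sign_vectors k"])
  also have "\<dots> = (\<Sum>j<k. \<Sum>l<k. if j = l then a j * a l * real (card (sign_vectors k)) else 0)"
    by (intro sum.cong refl) (simp add: sum_sign_vectors_mult)
  finally show ?thesis
    by (simp add: sum_distrib_left power2_eq_square mult_ac)
qed

text \<open>Averaged Khintchine inequality: Cauchy--Schwarz plus orthogonality of the sign vectors.\<close>
lemma sum_sign_vectors_abs_le:
  fixes a :: "nat \<Rightarrow> real"
  shows "(\<Sum>e\<in>sign_vectors k. \<bar>\<Sum>j<k. a j * e j\<bar>) \<le>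
           real (card (sign_vectors k)) * sqrt (\<Sum>j<k. (a j)\<^sup>2)"
proof (rule power2_le_imp_le)
  have "(\<Sum>e\<in>sign_vectors k. \<bar>\<Sum>j<k. a j * e j\<bar>)\<^sup>2 \<le>
      (\<Sum>e\<in>sign_vectors k. \<bar>\<Sum>j<k. a j * e j\<bar>\<^sup>2) * card (sign_vectors k)"
    by (rule sum_squared_le_sum_of_squares)
  also have "\<dots> = (real (card (sign_vectors k)) * sqrt (\<Sum>j<k. (a j)\<^sup>2))\<^sup>2"
    by (simp only: power2_abs sum_sign_vectors_square) (simp add: power_mult_distrib sum_nonneg power2_eq_square)
  finally show "(\<Sum>e\<in>sign_vectors k. \<bar>\<Sum>j<k. a j * e j\<bar>)\<^sup>2 \<le> \<dots>" .
qed (simp add: sum_nonneg)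

lemma sum_sqrt_le_sqrt_card_mult_sum:
  fixes q :: "'a \<Rightarrow> real"
  assumes "\<And>i. i \<in> I \<Longrightarrow> q i \<ge> 0"
  shows "(\<Sum>i\<in>I. sqrt (q i)) \<le> sqrt (real (card I) * (\<Sum>i\<in>I. q i))"
proof (rule real_le_rsqrt)
  have "(\<Sum>i\<in>I. sqrt (q i))\<^sup>2 \<le> (\<Sum>i\<in>I. (sqrt (q i))\<^sup>2) * card I"
    by (rule sum_squared_le_sum_of_squares)
  then show "(\<Sum>i\<in>I. sqrt (q i))\<^sup>2 \<le> real (card I) * (\<Sum>i\<in>I. q i)"
    using assms by (simp add: mult.commute)
qed

lemma sum_matA_square:
  assumes "S j \<subseteq> {..<D}"
  shows "(\<Sum>i<D. (matA S i j)\<^sup>2) = 1 / real (card (S j))"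
proof -
  have "(\<Sum>i<D. (matA S i j)\<^sup>2) = (\<Sum>i\<in>{..<D} \<inter> S j. (1 / real (card (S j)))\<^sup>2)"
    by (simp add: matA_def sum.If_cases if_distrib[of "\<lambda>x. x\<^sup>2"] Int_def)
  also have "{..<D} \<inter> S j = S j"
    using assms by auto
  finally show ?thesis
    by (simp add: power2_eq_square)
qed

lemma sum_sign_vectors_Ax_l1_le:
  assumes "\<And>j. j < k \<Longrightarrow> S j \<subseteq> {..<D}"
  shows "(\<Sum>e\<in>sign_vectors k. Ax_l1 D k S e) \<le>
           real (card (sign_vectors k)) * sqrt (real D * (\<Sum>j<k. 1 / real (card (S j))))"
proof -
  define q where "q i = (\<Sum>j<k. (matA S i j)\<^sup>2)" for i
  have "(\<Sum>e\<in>sign_vectors k. Ax_l1 D k S e) =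
      (\<Sum>i<D. \<Sum>e\<in>sign_vectors k. \<bar>\<Sum>j<k. matA S i j * e j\<bar>)"
    unfolding Ax_l1_def by (rule sum.swap)
  also have "\<dots> \<le> (\<Sum>i<D. real (card (sign_vectors k)) * sqrt (q i))"
    unfolding q_def by (intro sum_mono sum_sign_vectors_abs_le)
  also have "\<dots> \<le> real (card (sign_vectors k)) * sqrt (real D * (\<Sum>i<D. q i))"
    using sum_sqrt_le_sqrt_card_mult_sum[of "{..<D}" q]
    by (simp add: sum_distrib_left[symmetric] q_def sum_nonneg mult_left_mono)
  also have "(\<Sum>i<D. q i) = (\<Sum>j<k. 1 / real (card (S j)))"
    unfolding q_def using assms by (subst sum.swap) (simp add: sum_matA_square)
  finally show ?thesis .
qed

lemma kappa_ge_of_witness: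
  assumes "l1_k k x > 0" "m * Ax_l1 D k S x \<le> l1_k k x"
  shows "ereal m \<le> kappa D k S"
  unfolding kappa_def
proof (rule Inf_greatest, clarify)
  fix c :: ereal
  assume c: "c > 0" "\<forall>x. ereal (l1_k k x) \<le> c * ereal (Ax_l1 D k S x)"
  show "ereal m \<le> c"
  proof (cases c)
    case (real r)
    have "l1_k k x \<le> r * Ax_l1 D k S x"
      using c(2) real by (metis times_ereal.simps(1) ereal_less_eq(3))
    moreover have "Ax_l1 D k S x \<ge> 0"
      unfolding Ax_l1_def by (simp add: sum_nonneg)
    ultimately have "m * Ax_l1 D k S x \<le> r * Ax_l1 D k S x" "Ax_l1 D k S x > 0"
      using assms by (force, fastforce simp: order_le_less)
    then show ?thesis
      using real by (simp add: mult_le_cancel_right_pos)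
  qed (use c in auto)
qed

definition large_columns :: "nat \<Rightarrow> nat \<Rightarrow> (nat \<Rightarrow> nat set) \<Rightarrow> bool" where
  "large_columns D k S \<longleftrightarrow> (\<forall>j<k. S j \<subseteq> {..<D} \<and> real D / 4 \<le> real (card (S j)))"

lemma kappa_ge_half_sqrt_of_large_columns:
  assumes "k > 0" "D > 0" and large: "large_columns D k S"
  shows "ereal (1/2 * sqrt (real k)) \<le> kappa D k S"
proof -
  have "(\<Sum>j<k. 1 / real (card (S j))) \<le> (\<Sum>j<k. 4 / real D)"
    using large \<open>D > 0\<close> unfolding large_columns_def
    by (intro sum_mono) (auto simp: divide_simps mult.commute)
  then have "sqrt (real D * (\<Sum>j<k. 1 / real (card (S j)))) \<le> sqrt (real D * (4 * real k / real D))"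
    using \<open>D > 0\<close> by (intro real_sqrt_le_mono mult_left_mono) (auto simp: mult.commute)
  also have "\<dots> = 2 * sqrt (real k)"
    using \<open>D > 0\<close> by (simp add: real_sqrt_mult)
  finally have "(\<Sum>e\<in>sign_vectors k. Ax_l1 D k S e) \<le> (\<Sum>e\<in>sign_vectors k. 2 * sqrt (real k))"
    using sum_sign_vectors_Ax_l1_le[of k S D] large unfolding large_columns_def
    by (simp add: order_trans mult_left_mono)
  then obtain e where e: "e \<in> sign_vectors k" "Ax_l1 D k S e \<le> 2 * sqrt (real k)"
    using sum_strict_mono[OF finite_sign_vectors sign_vectors_nonempty] by (meson not_le)
  have l1: "l1_k k e = real k"
    unfolding l1_k_def using abs_sign_vector[OF e(1)] by simp
  have "1/2 * sqrt (real k) * Ax_l1 D k S e \<le> 1/2 * sqrt (real k) * (2 * sqrt (real k))"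
    using e(2) by (intro mult_left_mono) auto
  then show ?thesis
    using \<open>k > 0\<close> l1 by (intro kappa_ge_of_witness[of k e]) auto
qed

section \<open>Upper bound for \<open>\<lambda>\<close>\<close>

lemma linf_k_attained:
  assumes "k > 0"
  obtains l where "l < k" "linf_k k x = \<bar>x l\<bar>" "\<And>j. j < k \<Longrightarrow> \<bar>x j\<bar> \<le> \<bar>x l\<bar>"
proof -
  define M where "M = (\<lambda>j. \<bar>x j\<bar>) ` {..<k}"
  have fin: "finite M" and ne: "M \<noteq> {}"
    using assms by (auto simp: M_def)
  obtain l where l: "l < k" "Max M = \<bar>x l\<bar>"
    using Max_in[OF fin ne] by (auto simp: M_def)
  have "\<bar>x j\<bar> \<le> \<bar>x l\<bar>" if "j < k" for j
  proof -
    have "\<bar>x j\<bar> \<in> M"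
      using that by (simp add: M_def)
    then show ?thesis
      using Max_ge[OF fin] l(2) by simp
  qed
  moreover have "linf_k k x = \<bar>x l\<bar>"
    unfolding linf_k_def M_def[symmetric] using fin ne l(2) by simp
  ultimately show ?thesis
    using that l(1) by blast
qed

lemma abs_sum_dominant_term_ge:
  fixes x c :: "nat \<Rightarrow> real"
  assumes "l < k" "c l = 1"
    and small: "\<And>j. j < k \<Longrightarrow> j \<noteq> l \<Longrightarrow> \<bar>c j\<bar> \<le> 1 / (2 * real k)"
    and dominant: "\<And>j. j < k \<Longrightarrow> \<bar>x j\<bar> \<le> \<bar>x l\<bar>"
  shows "\<bar>x l\<bar> / 2 \<le> \<bar>\<Sum>j<k. x j * c j\<bar>"
proof -
  have "\<bar>\<Sum>j\<in>{..<k} - {l}. x j * c j\<bar> \<le> (\<Sum>j\<in>{..<k} - {l}. \<bar>x l\<bar> * (1 / (2 * real k)))"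
  proof (intro order_trans[OF sum_abs] sum_mono)
    fix j assume "j \<in> {..<k} - {l}"
    then show "\<bar>x j * c j\<bar> \<le> \<bar>x l\<bar> * (1 / (2 * real k))"
      unfolding abs_mult using small dominant by (intro mult_mono) auto
  qed
  also have "\<dots> \<le> \<bar>x l\<bar> / 2"
    using \<open>l < k\<close> by (simp add: card_Diff_singleton of_nat_diff divide_simps algebra_simps)
  finally have "\<bar>\<Sum>j\<in>{..<k} - {l}. x j * c j\<bar> \<le> \<bar>x l\<bar> / 2" .
  moreover have "(\<Sum>j<k. x j * c j) = x l + (\<Sum>j\<in>{..<k} - {l}. x j * c j)"
    using assms(1,2) by (subst sum.remove[of _ l]) auto
  ultimately show ?thesis
    by linarith
qed

lemma abs_dual_pairing_le_Ax_l1: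
  assumes "\<And>i. i < D \<Longrightarrow> \<bar>s i\<bar> \<le> 1"
  shows "\<bar>\<Sum>j<k. x j * (\<Sum>i<D. s i * matA S i j)\<bar> \<le> Ax_l1 D k S x"
proof -
  have "(\<Sum>j<k. x j * (\<Sum>i<D. s i * matA S i j)) = (\<Sum>i<D. s i * (\<Sum>j<k. matA S i j * x j))"
    by (simp add: sum_distrib_left sum_distrib_right mult_ac sum.swap[of _ "{..<D}"])
  also have "\<bar>\<dots>\<bar> \<le> (\<Sum>i<D. \<bar>s i\<bar> * \<bar>\<Sum>j<k. matA S i j * x j\<bar>)"
    by (rule order_trans[OF sum_abs]) (simp add: abs_mult)
  also have "\<dots> \<le> Ax_l1 D k S x"
    unfolding Ax_l1_def using assms by (intro sum_mono mult_left_le_one_le) auto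
  finally show ?thesis .
qed

lemma lambda_cn_le_of_bound:
  assumes "c > 0" "\<And>x. linf_k k x \<le> c * Ax_l1 D k S x"
  shows "lambda_cn D k S \<le> ereal c"
  unfolding lambda_cn_def using assms by (intro Inf_lower) auto

definition balanced_columns :: "nat \<Rightarrow> nat \<Rightarrow> (nat \<Rightarrow> nat set) \<Rightarrow> bool" where
  "balanced_columns D k S \<longleftrightarrow> (\<forall>j<k. \<forall>l<k. j \<noteq> l \<longrightarrow>
     \<bar>\<Sum>i<D. of_bool (i \<in> S j) * (2 * of_bool (i \<in> S l) - 1)\<bar> \<le> real D / (8 * real k))"

lemma lambda_cn_le_2_of_balanced_columns:
  assumes "k > 0" "D > 0" and large: "large_columns D k S" and balanced: "balanced_columns D k S"
  shows "lambda_cn D k S \<le> 2"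
proof -
  have "linf_k k x \<le> 2 * Ax_l1 D k S x" for x
  proof -
    obtain l where l: "l < k" "linf_k k x = \<bar>x l\<bar>" "\<And>j. j < k \<Longrightarrow> \<bar>x j\<bar> \<le> \<bar>x l\<bar>"
      using linf_k_attained[OF \<open>k > 0\<close>] by blast
    define s where "s i = 2 * of_bool (i \<in> S l) - (1::real)" for i
    define c where "c j = (\<Sum>i<D. s i * matA S i j)" for j
    have card_pos: "real (card (S j)) \<ge> real D / 4" "real (card (S j)) > 0" if "j < k" for j
      using large that \<open>D > 0\<close> unfolding large_columns_def by (auto intro: less_le_trans)
    have c_eq: "c j = (\<Sum>i<D. of_bool (i \<in> S j) * s i) / real (card (S j))" for j
      unfolding c_def sum_divide_distrib by (intro sum.cong) (auto simp: matA_def)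
    have "(\<Sum>i<D. of_bool (i \<in> S l) * s i) = real (card (S l))"
      using large l(1) unfolding large_columns_def by (auto simp: s_def Int_absorb1)
    then have "c l = 1"
      using card_pos[OF l(1)] by (simp add: c_eq)
    moreover have "\<bar>c j\<bar> \<le> 1 / (2 * real k)" if "j < k" "j \<noteq> l" for j
    proof -
      have "\<bar>c j\<bar> \<le> (real D / (8 * real k)) / (real D / 4)"
        unfolding c_eq abs_divide using balanced that l(1) card_pos[OF that(1)] \<open>D > 0\<close>
        unfolding balanced_columns_def s_def
        by (intro frac_le) auto
      also have "\<dots> = 1 / (2 * real k)"
        using \<open>D > 0\<close> by (simp add: field_simps)
      finally show ?thesis .
    qed
    ultimately have "\<bar>x l\<bar> / 2 \<le> \<bar>\<Sum>j<k. x j * c j\<bar>"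
      using l by (intro abs_sum_dominant_term_ge) auto
    also have "\<dots> \<le> Ax_l1 D k S x"
      unfolding c_def by (rule abs_dual_pairing_le_Ax_l1) (simp add: s_def)
    finally show ?thesis
      using l(2) by simp
  qed
  then show ?thesis
    using lambda_cn_le_of_bound[of 2] by simp
qed

section \<open>Typical column configurations\<close>

lemma Pi_pmf_hoeffding_abs_ge:
  fixes p :: "'a pmf" and f :: "'a \<Rightarrow> real"
  assumes bounded: "\<And>r. f r \<in> {a..b}" and "a < b" "n > 0" "t \<ge> 0"
  shows "measure_pmf.prob (Pi_pmf {..<n} dflt (\<lambda>_. p))
           {w. t \<le> \<bar>(\<Sum>i<n. f (w i)) - real n * measure_pmf.expectation p f\<bar>}
         \<le> 2 * exp (-2 * t\<^sup>2 / (real n * (b - a)\<^sup>2))"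
proof -
  let ?P = "Pi_pmf {..<n} dflt (\<lambda>_. p)"
  interpret Hoeffding_ineq "measure_pmf ?P" "{..<n}" "\<lambda>i w. f (w i)" "\<lambda>_. a" "\<lambda>_. b"
     "\<Sum>i<n. measure_pmf.expectation ?P (\<lambda>w. f (w i))"
  proof unfold_locales
    show "prob_space.indep_vars (measure_pmf ?P) (\<lambda>_. borel) (\<lambda>i w. f (w i)) {..<n}"
      by (rule prob_space.indep_vars_compose2[OF measure_pmf.prob_space_axioms indep_vars_Pi_pmf])
         auto
  qed (use bounded in auto)
  have "measure_pmf.expectation ?P (\<lambda>w. f (w i)) = measure_pmf.expectation p f" if "i < n" for i
  proof -
    have "map_pmf (\<lambda>w. w i) ?P = p"
      using that by (subst Pi_pmf_component) auto
    then show ?thesis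
      by (metis integral_map_pmf)
  qed
  moreover have "(\<Sum>i<n. (b - a)\<^sup>2) > 0"
    using assms by simp
  ultimately show ?thesis
    using Hoeffding_ineq_abs_ge[OF \<open>t \<ge> 0\<close>] by simp
qed

lemma prob_ge_one_minus_sum_prob_bad:
  fixes p :: "'a pmf"
  assumes "finite I" and good: "\<And>w. (\<And>i. i \<in> I \<Longrightarrow> w \<notin> B i) \<Longrightarrow> w \<in> G"
  shows "1 - (\<Sum>i\<in>I. measure_pmf.prob p (B i)) \<le> measure_pmf.prob p G"
proof -
  have "1 - measure_pmf.prob p G = measure_pmf.prob p (- G)"
    using measure_pmf.prob_compl[of G p] by (simp add: Compl_eq_Diff_UNIV)
  also have "\<dots> \<le> measure_pmf.prob p (\<Union>i\<in>I. B i)"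
    using good by (intro measure_pmf.finite_measure_mono) auto
  also have "\<dots> \<le> (\<Sum>i\<in>I. measure_pmf.prob p (B i))"
    using \<open>finite I\<close> by (intro measure_pmf.finite_measure_subadditive_finite) auto
  finally show ?thesis by simp
qed

definition unbalanced_column :: "nat \<Rightarrow> nat \<Rightarrow> (nat \<Rightarrow> nat \<Rightarrow> bool) set" where
  "unbalanced_column D j = {w. real D / 4 \<le> \<bar>(\<Sum>i<D. of_bool (w i j)) - real D / 2\<bar>}"

definition correlated_columns :: "nat \<Rightarrow> nat \<Rightarrow> nat \<times> nat \<Rightarrow> (nat \<Rightarrow> nat \<Rightarrow> bool) set" where
  "correlated_columns D k = (\<lambda>(j, l).
     {w. real D / (8 * real k) \<le> \<bar>\<Sum>i<D. of_bool (w i j) * (2 * of_bool (w i l) - 1)\<bar>})"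

lemma prob_unbalanced_column_le:
  assumes "j < k" "D > 0"
  shows "measure_pmf.prob (coin_matrix D k) (unbalanced_column D j) \<le> 2 * exp (- real D / 8)"
proof -
  have "measure_pmf.prob (coin_matrix D k) (unbalanced_column D j)
      \<le> 2 * exp (-2 * (real D / 4)\<^sup>2 / (real D * (1 - 0)\<^sup>2))"
    unfolding coin_matrix_def unbalanced_column_def
    using Pi_pmf_hoeffding_abs_ge[where f = "\<lambda>r. of_bool (r j)" and a = 0 and b = 1 and n = D
        and t = "real D / 4" and p = "coin_row k" and dflt = "\<lambda>_. False"] assms
    by (simp add: expectation_coin_row_indicator)
  also have "\<dots> = 2 * exp (- real D / 8)"
    using assms by (simp add: power2_eq_square field_simps)
  finally show ?thesis .
qed

lemma sum_prob_unbalanced_columns_le: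
  assumes "D > 0"
  shows "(\<Sum>j<k. measure_pmf.prob (coin_matrix D k) (unbalanced_column D j))
           \<le> real k * (2 * exp (- real D / 8))"
proof -
  have "(\<Sum>j<k. measure_pmf.prob (coin_matrix D k) (unbalanced_column D j))
      \<le> real (card {..<k}) * (2 * exp (- real D / 8))"
    using prob_unbalanced_column_le assms by (intro sum_bounded_above) auto
  then show ?thesis
    by simp
qed

lemma prob_correlated_columns_le:
  assumes "j < k" "l < k" "j \<noteq> l" "D > 0"
  shows "measure_pmf.prob (coin_matrix D k) (correlated_columns D k (j, l))
           \<le> 2 * exp (- real D / (128 * (real k)\<^sup>2))"
proof -
  have "measure_pmf.prob (coin_matrix D k) (correlated_columns D k (j, l))
      \<le> 2 * exp (-2 * (real D / (8 * real k))\<^sup>2 / (real D * (1 - (-1))\<^sup>2))"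
    unfolding coin_matrix_def correlated_columns_def
    using Pi_pmf_hoeffding_abs_ge[where f = "\<lambda>r. of_bool (r j) * (2 * of_bool (r l) - 1)"
        and a = "-1" and b = 1 and n = D and t = "real D / (8 * real k)" and p = "coin_row k"
        and dflt = "\<lambda>_. False"] assms
    by (simp add: expectation_coin_row_indicator_times_sign)
  also have "\<dots> = 2 * exp (- real D / (128 * (real k)\<^sup>2))"
    using assms by (simp add: power2_eq_square field_simps)
  finally show ?thesis .
qed

lemma sum_prob_correlated_columns_le:
  assumes "D > 0"
  shows "(\<Sum>p\<in>{(j, l). j < k \<and> l < k \<and> j \<noteq> l}. measure_pmf.prob (coin_matrix D k) (correlated_columns D k p))
           \<le> (real k)\<^sup>2 * (2 * exp (- real D / (128 * (real k)\<^sup>2)))"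
proof -
  let ?pairs = "{(j, l). j < k \<and> l < k \<and> j \<noteq> l}"
  have "card ?pairs \<le> card ({..<k} \<times> {..<k})"
    by (intro card_mono) auto
  then have card_pairs: "real (card ?pairs) \<le> (real k)\<^sup>2"
    by (simp add: power2_eq_square flip: of_nat_mult)
  have "(\<Sum>p\<in>?pairs. measure_pmf.prob (coin_matrix D k) (correlated_columns D k p))
      \<le> real (card ?pairs) * (2 * exp (- real D / (128 * (real k)\<^sup>2)))"
    using prob_correlated_columns_le assms by (intro sum_bounded_above) auto
  also have "\<dots> \<le> (real k)\<^sup>2 * (2 * exp (- real D / (128 * (real k)\<^sup>2)))"
    using card_pairs by (intro mult_right_mono) auto
  finally show ?thesis .
qed

lemma large_columns_column_sets:
  assumes "\<And>j. j < k \<Longrightarrow> w \<notin> unbalanced_column D j"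
  shows "large_columns D k (column_sets D k w)"
proof -
  have "real D / 4 \<le> real (card {i. i < D \<and> w i j})" if "j < k" for j
  proof -
    have "(\<Sum>i<D. of_bool (w i j)) = real (card {i. i < D \<and> w i j})"
      by (simp add: Int_def)
    then show ?thesis
      using assms[OF that] unfolding unbalanced_column_def by (simp add: abs_if split: if_splits)
  qed
  then show ?thesis
    unfolding large_columns_def column_sets_def by auto
qed

lemma balanced_columns_column_sets:
  assumes "\<And>j l. j < k \<Longrightarrow> l < k \<Longrightarrow> j \<noteq> l \<Longrightarrow> w \<notin> correlated_columns D k (j, l)"
  shows "balanced_columns D k (column_sets D k w)"
proof -
  have "(\<Sum>i<D. of_bool (i \<in> column_sets D k w j) * (2 * of_bool (i \<in> column_sets D k w l) - 1))
      = (\<Sum>i<D. of_bool (w i j) * (2 * of_bool (w i l) - 1) :: real)" if "j < k" "l < k" for j l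
    using that by (intro sum.cong) (auto simp: column_sets_def)
  then show ?thesis
    using assms unfolding balanced_columns_def correlated_columns_def by fastforce
qed

lemma prob_kappa_ge_half_sqrt:
  assumes "k > 0" "D > 0"
  shows "1 - real k * (2 * exp (- real D / 8))
           \<le> measure_pmf.prob (rand_sets D k) {S. kappa D k S \<ge> ereal (1/2 * sqrt (real k))}"
proof -
  have "1 - (\<Sum>j<k. measure_pmf.prob (coin_matrix D k) (unbalanced_column D j))
      \<le> measure_pmf.prob (coin_matrix D k) {w. kappa D k (column_sets D k w) \<ge> ereal (1/2 * sqrt (real k))}"
  proof (rule prob_ge_one_minus_sum_prob_bad)
    fix w assume "\<And>j. j \<in> {..<k} \<Longrightarrow> w \<notin> unbalanced_column D j"
    then have "large_columns D k (column_sets D k w)"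
      by (simp add: large_columns_column_sets)
    then show "w \<in> {w. kappa D k (column_sets D k w) \<ge> ereal (1/2 * sqrt (real k))}"
      using kappa_ge_half_sqrt_of_large_columns[OF assms] by blast
  qed simp
  moreover have "(\<Sum>j<k. measure_pmf.prob (coin_matrix D k) (unbalanced_column D j))
      \<le> real k * (2 * exp (- real D / 8))"
    by (rule sum_prob_unbalanced_columns_le) fact
  ultimately show ?thesis
    by (simp add: prob_rand_sets_eq_coin_matrix)
qed

lemma prob_lambda_cn_le_2:
  assumes "k > 0" "D > 0"
  shows "1 - (real k * (2 * exp (- real D / 8)) + (real k)\<^sup>2 * (2 * exp (- real D / (128 * (real k)\<^sup>2))))
           \<le> measure_pmf.prob (rand_sets D k) {S. lambda_cn D k S \<le> 2}"
proof -
  define pairs where "pairs = {(j, l). j < k \<and> l < k \<and> j \<noteq> l}"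
  define bad where "bad = case_sum (unbalanced_column D) (correlated_columns D k)"
  have fin: "finite pairs"
    by (rule finite_subset[of _ "{..<k} \<times> {..<k}"]) (auto simp: pairs_def)
  have "1 - (\<Sum>i\<in>{..<k} <+> pairs. measure_pmf.prob (coin_matrix D k) (bad i))
      \<le> measure_pmf.prob (coin_matrix D k) {w. lambda_cn D k (column_sets D k w) \<le> 2}"
  proof (intro prob_ge_one_minus_sum_prob_bad)
    fix w assume good: "\<And>i. i \<in> {..<k} <+> pairs \<Longrightarrow> w \<notin> bad i"
    have "w \<notin> unbalanced_column D j" if "j < k" for j
      using good[OF InlI] that by (simp add: bad_def)
    moreover have "w \<notin> correlated_columns D k (j, l)" if "j < k" "l < k" "j \<noteq> l" for j l
      using good[OF InrI, of "(j, l)"] that by (simp add: bad_def pairs_def)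
    ultimately have "large_columns D k (column_sets D k w)" "balanced_columns D k (column_sets D k w)"
      by (simp_all add: large_columns_column_sets balanced_columns_column_sets)
    then show "w \<in> {w. lambda_cn D k (column_sets D k w) \<le> 2}"
      using lambda_cn_le_2_of_balanced_columns[OF assms] by blast
  qed (use fin in auto)
  moreover have "(\<Sum>i\<in>{..<k} <+> pairs. measure_pmf.prob (coin_matrix D k) (bad i))
      \<le> real k * (2 * exp (- real D / 8)) + (real k)\<^sup>2 * (2 * exp (- real D / (128 * (real k)\<^sup>2)))"
    using sum_prob_unbalanced_columns_le[OF \<open>D > 0\<close>, of k]
      sum_prob_correlated_columns_le[OF \<open>D > 0\<close>, of k] fin
    by (simp add: sum.Plus bad_def comp_def pairs_def)
  ultimately show ?thesis
    by (simp add: prob_rand_sets_eq_coin_matrix)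
qed

section \<open>Asymptotics\<close>

lemma exp_neg_le_inverse_power:
  assumes "x > 0" "real n * ln x \<le> t"
  shows "exp (- t) \<le> 1 / x ^ n"
proof -
  have "exp (- t) \<le> exp (- (real n * ln x))"
    using assms(2) by simp
  also have "\<dots> = 1 / x ^ n"
    using assms(1) by (simp add: exp_minus ln_realpow[symmetric] inverse_eq_divide)
  finally show ?thesis .
qed

lemma prob_kappa_ge_half_sqrt_ge:
  assumes "k \<ge> 2" "16 * ln (real k) \<le> real D"
  shows "1 - 2 / real k
           \<le> measure_pmf.prob (rand_sets D k) {S. kappa D k S \<ge> ereal (1/2 * sqrt (real k))}"
proof -
  have "ln (real k) > 0"
    using assms(1) by simp
  then have "D > 0"
    using assms(2) by simp
  have "exp (- (real D / 8)) \<le> 1 / (real k)\<^sup>2"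
    using assms by (intro exp_neg_le_inverse_power) auto
  then have "real k * (2 * exp (- real D / 8)) \<le> 2 / real k"
    using assms(1) by (simp add: field_simps power2_eq_square)
  then show ?thesis
    using prob_kappa_ge_half_sqrt[of k D] assms(1) \<open>D > 0\<close> by simp
qed

lemma prob_lambda_cn_le_2_ge:
  assumes "k \<ge> 2" "512 * ((real k)\<^sup>2 * ln (real k)) \<le> real D"
  shows "1 - 4 / real k \<le> measure_pmf.prob (rand_sets D k) {S. lambda_cn D k S \<le> 2}"
proof -
  have lnk: "ln (real k) > 0" and k2: "(real k)\<^sup>2 \<ge> 1"
    using assms(1) by (auto simp: one_le_power)
  then have "16 * ln (real k) \<le> real D"
    using assms(2) mult_right_mono[OF k2 less_imp_le[OF lnk]] lnk by linarith
  then have "D > 0"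
    using lnk by simp
  have "exp (- (real D / 8)) \<le> 1 / (real k)\<^sup>2"
    using \<open>16 * ln (real k) \<le> real D\<close> assms(1) by (intro exp_neg_le_inverse_power) auto
  then have first: "real k * (2 * exp (- real D / 8)) \<le> 2 / real k"
    using assms(1) by (simp add: field_simps power2_eq_square)
  have "real 4 * ln (real k) \<le> real D / (128 * (real k)\<^sup>2)"
    using assms by (simp add: pos_le_divide_eq mult_ac)
  then have "exp (- (real D / (128 * (real k)\<^sup>2))) \<le> 1 / real k ^ 4"
    using assms(1) by (intro exp_neg_le_inverse_power) auto
  then have "(real k)\<^sup>2 * (2 * exp (- real D / (128 * (real k)\<^sup>2))) \<le> 2 / (real k)\<^sup>2"
    using assms(1) by (simp add: field_simps power2_eq_square power4_eq_xxxx)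
  also have "\<dots> \<le> 2 / real k"
    using assms(1) by (intro divide_left_mono) (auto simp: power2_eq_square)
  finally show ?thesis
    using prob_lambda_cn_le_2[of k D] first assms(1) \<open>D > 0\<close> by simp
qed

lemma prob_tendsto_one:
  fixes p :: "nat \<Rightarrow> 'a pmf"
  assumes "eventually (\<lambda>k. 1 - c / real k \<le> measure_pmf.prob (p k) (A k)) sequentially"
  shows "(\<lambda>k. measure_pmf.prob (p k) (A k)) \<longlonglongrightarrow> 1"
proof (rule tendsto_sandwich[OF assms])
  show "(\<lambda>k. 1 - c / real k) \<longlonglongrightarrow> 1"
    using tendsto_diff[OF tendsto_const lim_const_over_n[of c]] by simp
qed auto

lemma kappa_ge_half_sqrt_with_high_probability:
  assumes "filterlim (\<lambda>k. real (D k) / (real k * ln (real k))) at_top sequentially"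
  shows "(\<lambda>k. measure_pmf.prob (rand_sets (D k) k)
           {S. kappa (D k) k S \<ge> ereal (1/2 * sqrt (real k))}) \<longlonglongrightarrow> 1"
proof (rule prob_tendsto_one)
  have "eventually (\<lambda>k. 16 \<le> real (D k) / (real k * ln (real k))) sequentially"
    using assms unfolding filterlim_at_top by blast
  with eventually_ge_at_top[of 2]
  show "eventually (\<lambda>k. 1 - 2 / real k \<le> measure_pmf.prob (rand_sets (D k) k)
          {S. kappa (D k) k S \<ge> ereal (1/2 * sqrt (real k))}) sequentially"
  proof eventually_elim
    case (elim k)
    then have "16 * (real k * ln (real k)) \<le> real (D k)"
      by (simp add: pos_le_divide_eq)
    moreover have "ln (real k) \<le> real k * ln (real k)"
      using elim by simp
    ultimately show ?case
      using elim by (intro prob_kappa_ge_half_sqrt_ge) linarith+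
  qed
qed

lemma lambda_cn_le_2_with_high_probability:
  assumes "filterlim (\<lambda>k. real (D k) / (real k ^ 2 * ln (real k))) at_top sequentially"
  shows "(\<lambda>k. measure_pmf.prob (rand_sets (D k) k) {S. lambda_cn (D k) k S \<le> 2}) \<longlonglongrightarrow> 1"
proof (rule prob_tendsto_one)
  have "eventually (\<lambda>k. 512 \<le> real (D k) / (real k ^ 2 * ln (real k))) sequentially"
    using assms unfolding filterlim_at_top by blast
  with eventually_ge_at_top[of 2]
  show "eventually (\<lambda>k. 1 - 4 / real k \<le> measure_pmf.prob (rand_sets (D k) k)
          {S. lambda_cn (D k) k S \<le> 2}) sequentially"
  proof eventually_elim
    case (elim k)
    then have "512 * ((real k)\<^sup>2 * ln (real k)) \<le> real (D k)"
      by (simp add: pos_le_divide_eq)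
    then show ?case
      using elim by (intro prob_lambda_cn_le_2_ge) linarith+
  qed
qed

theorem lemma6p4:
  fixes D :: "nat \<Rightarrow> nat"
  shows "(filterlim (\<lambda>k. real (D k) / (real k * ln (real k))) at_top sequentially \<longrightarrow>
           (\<exists>c>0. (\<lambda>k. measure_pmf.prob (rand_sets (D k) k)
                      {S. kappa (D k) k S \<ge> ereal (c * sqrt (real k))}) \<longlonglongrightarrow> 1))
       \<and> (filterlim (\<lambda>k. real (D k) / (real k ^ 2 * ln (real k))) at_top sequentially \<longrightarrow>
           (\<lambda>k. measure_pmf.prob (rand_sets (D k) k)
                      {S. lambda_cn (D k) k S \<le> 2}) \<longlonglongrightarrow> 1)"
  using kappa_ge_half_sqrt_with_high_probability[of D] lambda_cn_le_2_with_high_probability[of D]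
  by (auto intro!: exI[of _ "1/2"])

end
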